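(* Let $P\in\mathbb{C}[y]$ with $\deg P\geq 2$, $\delta\in\mathbb{C}\setminus\{0\}$, $h_1(x,y)=(y,P(y)-\delta x)$, $\theta\in(0,2\pi)\setminus\{\frac{\pi}{2},\pi,\frac{3\pi}{2}\}$, $R_\theta$ the linear map of $\mathbb{C}^2$ with matrix $\begin{pmatrix}\cos\theta&-\sin\theta\\ \sin\theta&\cos\theta\end{pmatrix}$, $h_2=R_\theta^{-1}\circ h_1\circ R_\theta$ and $G=\langle h_1,h_2\rangle$. Let $\nu=a_1\delta_{h_1}+a_2\delta_{h_2}+a_3\delta_{h_1^{-1}}+a_4\delta_{h_2^{-1}}$ with $a_i>0$ for each $i$ and $\sum_{i=1}^4a_i=1$. If the filled Julia sets $K(h_1)$ and $K(h_2)$ are disjoint, then there is no $\nu$-stationary Borel probability measure on $\mathbb{C}^2$.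
   Context: For an automorphism $h$ of $\mathbb{C}^2$, the filled Julia set is $K(h)=\{(x,y)\in\mathbb{C}^2:(h^n(x,y))_{n\in\mathbb{Z}}\text{ is bounded}\}$. A Borel probability measure $\mu$ on $\mathbb{C}^2$ is $\nu$-stationary if $\mu=a_1(h_1)_*\mu+a_2(h_2)_*\mu+a_3(h_1^{-1})_*\mu+a_4(h_2^{-1})_*\mu$. *)

theory Defs
  imports "HOL-Probability.Probability" "HOL-Computational_Algebra.Polynomial"
begin

definition int_iter :: "('a \<Rightarrow> 'a) \<Rightarrow> int \<Rightarrow> 'a \<Rightarrow> 'a" where
  "int_iter h n = (if n \<ge> 0 then h ^^ nat n else inv h ^^ nat (- n))"

definition filled_julia :: "(complex \<times> complex \<Rightarrow> complex \<times> complex) \<Rightarrow> (complex \<times> complex) set" where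
  "filled_julia h = {z. bounded (range (\<lambda>n::int. int_iter h n z))}"

definition henon :: "complex poly \<Rightarrow> complex \<Rightarrow> complex \<times> complex \<Rightarrow> complex \<times> complex" where
  "henon P \<delta> = (\<lambda>(x, y). (y, poly P y - \<delta> * x))"

definition rot :: "real \<Rightarrow> complex \<times> complex \<Rightarrow> complex \<times> complex" where
  "rot \<theta> = (\<lambda>(x, y). (complex_of_real (cos \<theta>) * x - complex_of_real (sin \<theta>) * y,
                       complex_of_real (sin \<theta>) * x + complex_of_real (cos \<theta>) * y))"

definition stationary ::
  "real \<Rightarrow> real \<Rightarrow> real \<Rightarrow> real \<Rightarrow> (complex \<times> complex \<Rightarrow> complex \<times> complex)
   \<Rightarrow> (complex \<times> complex \<Rightarrow> complex \<times> complex) \<Rightarrow> (complex \<times> complex) measure \<Rightarrow> bool" where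
  "stationary a1 a2 a3 a4 h1 h2 \<mu> \<longleftrightarrow>
     sets \<mu> = sets borel \<and> prob_space \<mu> \<and>
     (\<forall>A \<in> sets borel.
        emeasure \<mu> A =
          ennreal a1 * emeasure (distr \<mu> borel h1) A
        + ennreal a2 * emeasure (distr \<mu> borel h2) A
        + ennreal a3 * emeasure (distr \<mu> borel (inv h1)) A
        + ennreal a4 * emeasure (distr \<mu> borel (inv h2)) A)"

end

(* Outside a large ball the four letters h1, h2, h1^-1, h2^-1 play ping-pong on four disjoint
   cones: a letter other than the inverse of the last one maps the current cone into its own
   cone, the inverse letter lowers the norm by at least 1, and h1 or h1^-1 sends every point
   outside the ball into a cone.  Weighting a point by r or s for each letter h1^(+-1) or
   h2^(+-1) of its reduced word gives a bounded measurable w with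
   a1 w(h1 z) + a2 w(h2 z) + a3 w(h1^-1 z) + a4 w(h2^-1 z) <= w(z),
   strictly outside the ball for suitable r, s < 1.  Integrating against a stationary
   probability measure mu forces equality mu-a.e., so mu lives on the ball; by stationarity so do
   all four orbits of mu-almost every point, which therefore lies in K(h1) and in K(h2). *)

theory Submission
  imports Defs "HOL-Computational_Algebra.Fundamental_Theorem_Algebra"
begin

section \<open>Contraction rates\<close>

lemma weighted_step_lt_1_eventually:
  fixes u v q X Y :: real
  assumes "u + v + q = 1" and "X * (v - u) < q * Y"
  shows "\<forall>\<^sub>F t in at_right 0. u * (1 - t * X) + q * (1 - t * Y) + v / (1 - t * X) < 1"
proof -
  define f where "f t = u * (1 - t * X) + q * (1 - t * Y) + v / (1 - t * X)" for t
  have "(f has_real_derivative X * (v - u) - q * Y) (at 0)"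
    unfolding f_def by (auto intro!: derivative_eq_intros simp: algebra_simps)
  then obtain d where "d > 0" "\<forall>t>0. t < d \<longrightarrow> f (0 + t) < f 0"
    using DERIV_neg_dec_right assms(2) by (metis diff_less_0_iff_less)
  moreover have "f 0 = 1" using assms(1) by (simp add: f_def)
  ultimately have "\<forall>\<^sub>F t in at_right 0. f t < 1"
    unfolding eventually_at_right_field by (intro exI[of _ d]) auto
  then show ?thesis unfolding f_def .
qed

text \<open>The rates \<open>r\<close> and \<open>s\<close> by which the ping-pong weight shrinks along \<open>h\<^sub>1\<^sup>\<plusminus>\<^sup>1\<close> and
  \<open>h\<^sub>2\<^sup>\<plusminus>\<^sup>1\<close>; the four inequalities make it strictly superharmonic on each cone.\<close>
lemma contraction_rates_exist:
  fixes a1 a2 a3 a4 :: real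
  assumes pos: "0 < a1" "0 < a2" "0 < a3" "0 < a4" and sum: "a1 + a2 + a3 + a4 = 1"
  shows "\<exists>r s. 0 < r \<and> r < 1 \<and> 0 < s \<and> s < 1
    \<and> a1 * r + a2 * s + a4 * s + a3 / r < 1 \<and> a3 * r + a2 * s + a4 * s + a1 / r < 1
    \<and> a1 * r + a3 * r + a2 * s + a4 / s < 1 \<and> a1 * r + a3 * r + a4 * s + a2 / s < 1"
proof -
  define p q where "p = a1 + a3" and "q = a2 + a4"
  define X Y where "X = q + \<bar>a2 - a4\<bar>" and "Y = p + \<bar>a1 - a3\<bar>"
  \<comment> \<open>so that the derivative conditions below reduce to \<open>\<bar>a1 - a3\<bar> * \<bar>a2 - a4\<bar> < p * q\<close>\<close>
  have "\<bar>a1 - a3\<bar> * \<bar>a2 - a4\<bar> < p * q"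
  proof -
    have "\<bar>a1 - a3\<bar> * \<bar>a2 - a4\<bar> \<le> \<bar>a1 - a3\<bar> * q"
      unfolding q_def using pos by (intro mult_left_mono) auto
    also have "\<dots> < p * q"
      unfolding p_def q_def using pos by (intro mult_strict_right_mono) auto
    finally show ?thesis .
  qed
  then have XY: "X * \<bar>a1 - a3\<bar> < q * Y" "Y * \<bar>a2 - a4\<bar> < p * X"
    unfolding X_def Y_def by (simp_all add: algebra_simps)
  have "X > 0" "Y > 0" using pos unfolding X_def Y_def p_def q_def by (auto intro: add_pos_nonneg)
  have derivative_neg: "X * (a3 - a1) < q * Y" "X * (a1 - a3) < q * Y" "Y * (a4 - a2) < p * X" "Y * (a2 - a4) < p * X"
    using XY mult_left_mono[OF abs_ge_self, of X] mult_left_mono[OF abs_ge_self, of Y]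
      \<open>X > 0\<close> \<open>Y > 0\<close> by (smt (verit) abs_minus_commute)+
  have "\<forall>\<^sub>F t in at_right 0. (t \<in> {0<..<1/X} \<and> t \<in> {0<..<1/Y})
      \<and> a1 * (1 - t * X) + q * (1 - t * Y) + a3 / (1 - t * X) < 1
      \<and> a3 * (1 - t * X) + q * (1 - t * Y) + a1 / (1 - t * X) < 1
      \<and> a2 * (1 - t * Y) + p * (1 - t * X) + a4 / (1 - t * Y) < 1
      \<and> a4 * (1 - t * Y) + p * (1 - t * X) + a2 / (1 - t * Y) < 1"
    using \<open>X > 0\<close> \<open>Y > 0\<close> derivative_neg sum
    by (intro eventually_conj eventually_at_right_real weighted_step_lt_1_eventually)
       (auto simp: p_def q_def)
  then obtain t where t: "t \<in> {0<..<1/X}" "t \<in> {0<..<1/Y}"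
      "a1 * (1 - t * X) + q * (1 - t * Y) + a3 / (1 - t * X) < 1"
      "a3 * (1 - t * X) + q * (1 - t * Y) + a1 / (1 - t * X) < 1"
      "a2 * (1 - t * Y) + p * (1 - t * X) + a4 / (1 - t * Y) < 1"
      "a4 * (1 - t * Y) + p * (1 - t * X) + a2 / (1 - t * Y) < 1"
    using eventually_happens' trivial_limit_at_right_real by blast
  show ?thesis
    using t \<open>X > 0\<close> \<open>Y > 0\<close>
    by (intro exI[of _ "1 - t * X"] exI[of _ "1 - t * Y"])
       (auto simp: p_def q_def algebra_simps field_simps)
qed

section \<open>Stationary measures of a finitely supported random walk\<close>

locale stationary_measure =
  fixes M :: "'a measure" and \<mu> :: "'a measure" and I :: "'i set"
    and a :: "'i \<Rightarrow> real" and g :: "'i \<Rightarrow> 'a \<Rightarrow> 'a"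
  assumes sets_\<mu>: "sets \<mu> = sets M"
    and finite_I: "finite I"
    and a_pos: "k \<in> I \<Longrightarrow> 0 < a k"
    and g_measurable: "k \<in> I \<Longrightarrow> g k \<in> M \<rightarrow>\<^sub>M M"
    and emeasure_stationary:
      "A \<in> sets M \<Longrightarrow> emeasure \<mu> A = (\<Sum>k\<in>I. ennreal (a k) * emeasure (distr \<mu> M (g k)) A)"
begin

lemma space_\<mu>: "space \<mu> = space M"
  using sets_eq_imp_space_eq[OF sets_\<mu>] .

lemma measurable_\<mu>: "measurable \<mu> N = measurable M N"
  by (rule measurable_cong_sets[OF sets_\<mu> refl])

lemma nn_integral_distr_stationary:
  assumes "f \<in> borel_measurable M"
  shows "(\<integral>\<^sup>+x. f x \<partial>\<mu>) = (\<Sum>k\<in>I. ennreal (a k) * (\<integral>\<^sup>+x. f x \<partial>distr \<mu> M (g k)))"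
  using assms
proof (induction rule: borel_measurable_induct)
  case (cong f f')
  have "(\<integral>\<^sup>+x. f x \<partial>N) = (\<integral>\<^sup>+x. f' x \<partial>N)" if "space N = space M" for N
    using cong.hyps(3) that by (intro nn_integral_cong) simp
  then show ?case
    using cong.IH by (simp add: space_\<mu>)
next
  case (set A)
  have "(\<integral>\<^sup>+x. indicator A x \<partial>N) = emeasure N A" if "sets N = sets M" for N
    using set that by simp
  then show ?case
    using emeasure_stationary[OF set] by (simp only: sets_\<mu> sets_distr)
next
  case (mult u c)
  have "(\<integral>\<^sup>+x. c * u x \<partial>N) = c * (\<integral>\<^sup>+x. u x \<partial>N)" if "sets N = sets M" for N
    using mult.hyps(2) by (simp add: nn_integral_cmult measurable_cong_sets[OF that refl])
  then show ?case
    by (simp only: sets_\<mu> sets_distr mult.IH sum_distrib_left mult.left_commute)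
next
  case (add u v)
  have "(\<integral>\<^sup>+x. v x + u x \<partial>N) = (\<integral>\<^sup>+x. v x \<partial>N) + (\<integral>\<^sup>+x. u x \<partial>N)" if "sets N = sets M" for N
    using add.hyps by (simp add: nn_integral_add measurable_cong_sets[OF that refl])
  then show ?case
    by (simp only: sets_\<mu> sets_distr add.IH sum.distrib distrib_left)
next
  case (seq U)
  have SUP_integral: "(\<integral>\<^sup>+x. (SUP i. U i) x \<partial>N) = (SUP i. \<integral>\<^sup>+x. U i x \<partial>N)"
    if "sets N = sets M" for N
    using seq.hyps
    by (simp add: image_comp nn_integral_monotone_convergence_SUP measurable_cong_sets[OF that refl])
  have "incseq (\<lambda>i. ennreal (a k) * (\<integral>\<^sup>+x. U i x \<partial>distr \<mu> M (g k)))" for k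
    using seq.hyps(3) by (auto simp: incseq_def le_fun_def intro!: mult_left_mono nn_integral_mono)
  then have "(\<Sum>k\<in>I. ennreal (a k) * (\<integral>\<^sup>+x. (SUP i. U i) x \<partial>distr \<mu> M (g k)))
      = (SUP i. \<Sum>k\<in>I. ennreal (a k) * (\<integral>\<^sup>+x. U i x \<partial>distr \<mu> M (g k)))"
    by (simp only: SUP_integral sets_distr SUP_mult_left_ennreal ennreal_SUP_sum)
  also have "\<dots> = (\<integral>\<^sup>+x. (SUP i. U i) x \<partial>\<mu>)"
    by (simp only: seq.IH SUP_integral sets_\<mu>)
  finally show ?case ..
qed

lemma nn_integral_stationary:
  assumes "f \<in> borel_measurable M"
  shows "(\<integral>\<^sup>+x. f x \<partial>\<mu>) = (\<Sum>k\<in>I. ennreal (a k) * (\<integral>\<^sup>+x. f (g k x) \<partial>\<mu>))"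
  unfolding nn_integral_distr_stationary[OF assms]
  using assms g_measurable by (intro sum.cong refl) (simp add: nn_integral_distr measurable_\<mu>)

lemma null_sets_vimage:
  assumes "A \<in> null_sets \<mu>" and "k \<in> I"
  shows "g k -` A \<inter> space M \<in> null_sets \<mu>"
proof -
  have A: "A \<in> sets M" using assms(1) sets_\<mu> by auto
  have "(\<Sum>j\<in>I. ennreal (a j) * emeasure \<mu> (g j -` A \<inter> space M)) = 0"
    using emeasure_stationary[OF A] null_setsD1[OF assms(1)] g_measurable A
    by (simp add: emeasure_distr measurable_\<mu> space_\<mu>)
  then have "ennreal (a k) * emeasure \<mu> (g k -` A \<inter> space M) = 0"
    using assms(2) finite_I by (simp add: sum_nonneg_eq_0_iff)
  moreover have "g k -` A \<inter> space M \<in> sets \<mu>"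
    using measurable_sets[OF g_measurable[OF assms(2)] A] sets_\<mu> by simp
  ultimately show ?thesis
    using a_pos[OF assms(2)] by auto
qed

lemma null_sets_vimage_funpow:
  assumes "A \<in> null_sets \<mu>" and "k \<in> I"
  shows "(g k ^^ n) -` A \<inter> space M \<in> null_sets \<mu>"
proof (induction n)
  case 0
  then show ?case
    using assms(1) by (simp flip: space_\<mu>)
next
  case (Suc n)
  have "(g k ^^ Suc n) -` A \<inter> space M = g k -` ((g k ^^ n) -` A \<inter> space M) \<inter> space M"
    using measurable_space[OF g_measurable[OF assms(2)]]
    by (auto simp: funpow_Suc_right simp del: funpow.simps)
  then show ?case
    using null_sets_vimage[OF Suc assms(2)] by (simp only:)
qed

lemma nn_integral_average:
  fixes h :: "'a \<Rightarrow> real"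
  assumes h_measurable: "h \<in> borel_measurable M" and h_nonneg: "\<And>x. x \<in> space M \<Longrightarrow> 0 \<le> h x"
  shows "(\<integral>\<^sup>+x. ennreal (\<Sum>k\<in>I. a k * h (g k x)) \<partial>\<mu>) = (\<integral>\<^sup>+x. ennreal (h x) \<partial>\<mu>)"
proof -
  have terms_nonneg: "0 \<le> a k" "0 \<le> h (g k x)" if "k \<in> I" "x \<in> space M" for k x
    using a_pos[OF that(1)] h_nonneg[OF measurable_space[OF g_measurable[OF that(1)] that(2)]] by auto
  have h_g_measurable: "(\<lambda>x. h (g k x)) \<in> borel_measurable M" if "k \<in> I" for k
    using measurable_compose[OF g_measurable[OF that] h_measurable] .
  have "ennreal (\<Sum>k\<in>I. a k * h (g k x)) = (\<Sum>k\<in>I. ennreal (a k) * ennreal (h (g k x)))"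
    if "x \<in> space M" for x
    using that by (subst sum_ennreal[symmetric]) (auto simp: terms_nonneg ennreal_mult)
  then have "(\<integral>\<^sup>+x. ennreal (\<Sum>k\<in>I. a k * h (g k x)) \<partial>\<mu>)
      = (\<integral>\<^sup>+x. (\<Sum>k\<in>I. ennreal (a k) * ennreal (h (g k x))) \<partial>\<mu>)"
    by (intro nn_integral_cong) (simp add: space_\<mu>)
  also have "\<dots> = (\<Sum>k\<in>I. ennreal (a k) * (\<integral>\<^sup>+x. ennreal (h (g k x)) \<partial>\<mu>))"
    using h_g_measurable by (simp add: nn_integral_sum nn_integral_cmult measurable_\<mu>)
  also have "\<dots> = (\<integral>\<^sup>+x. ennreal (h x) \<partial>\<mu>)"
    using h_measurable by (intro nn_integral_stationary[symmetric]) simp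
  finally show ?thesis .
qed

lemma null_sets_if_superharmonic:
  fixes h :: "'a \<Rightarrow> real"
  assumes finite: "emeasure \<mu> (space M) \<noteq> \<infinity>"
    and h_measurable: "h \<in> borel_measurable M"
    and h_bounds: "\<And>x. x \<in> space M \<Longrightarrow> 0 \<le> h x \<and> h x \<le> 1"
    and superharmonic: "\<And>x. x \<in> space M \<Longrightarrow> (\<Sum>k\<in>I. a k * h (g k x)) \<le> h x"
    and strict: "\<And>x. x \<in> space M - D \<Longrightarrow> (\<Sum>k\<in>I. a k * h (g k x)) < h x"
    and D: "D \<in> sets M"
  shows "space M - D \<in> null_sets \<mu>"
proof -
  define Ph where "Ph x = (\<Sum>k\<in>I. a k * h (g k x))" for x
  have Ph_eq: "(\<integral>\<^sup>+x. ennreal (Ph x) \<partial>\<mu>) = (\<integral>\<^sup>+x. ennreal (h x) \<partial>\<mu>)"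
    unfolding Ph_def using h_measurable h_bounds by (intro nn_integral_average) auto
  have Ph_nonneg: "0 \<le> Ph x" if "x \<in> space M" for x
    unfolding Ph_def using that a_pos h_bounds measurable_space[OF g_measurable]
    by (intro sum_nonneg mult_nonneg_nonneg) (auto intro: less_imp_le)
  have Ph_measurable: "Ph \<in> borel_measurable M"
    unfolding Ph_def using measurable_compose[OF g_measurable h_measurable]
    by (intro borel_measurable_sum borel_measurable_times borel_measurable_const) auto
  have "(\<integral>\<^sup>+x. ennreal (h x) \<partial>\<mu>) \<le> (\<integral>\<^sup>+x. 1 \<partial>\<mu>)"
    using h_bounds by (intro nn_integral_mono) (simp add: space_\<mu>)
  then have h_finite: "(\<integral>\<^sup>+x. ennreal (h x) \<partial>\<mu>) \<noteq> \<infinity>"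
    using finite by (auto simp: space_\<mu> top_unique)
  have "(\<integral>\<^sup>+x. ennreal (h x) \<partial>\<mu>) = (\<integral>\<^sup>+x. ennreal (Ph x) + ennreal (h x - Ph x) \<partial>\<mu>)"
    using superharmonic Ph_nonneg
    by (intro nn_integral_cong) (simp add: space_\<mu> Ph_def flip: ennreal_plus)
  also have "\<dots> = (\<integral>\<^sup>+x. ennreal (h x) \<partial>\<mu>) + (\<integral>\<^sup>+x. ennreal (h x - Ph x) \<partial>\<mu>)"
    using h_measurable Ph_measurable by (simp add: nn_integral_add measurable_\<mu> Ph_eq)
  finally have "(\<integral>\<^sup>+x. ennreal (h x - Ph x) \<partial>\<mu>) = 0"
    using h_finite by (simp add: ennreal_add_left_cancel)
  then have "AE x in \<mu>. ennreal (h x - Ph x) = 0"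
    using h_measurable Ph_measurable by (simp add: nn_integral_0_iff_AE measurable_\<mu>)
  then have "AE x in \<mu>. x \<notin> space M - D"
  proof (rule AE_mp, intro AE_I2 impI)
    fix x assume "x \<in> space \<mu>" "ennreal (h x - Ph x) = 0"
    then show "x \<notin> space M - D"
      using strict[of x] by (auto simp: Ph_def space_\<mu> ennreal_eq_0_iff)
  qed
  then show ?thesis
    using D by (simp add: AE_iff_null_sets sets_\<mu>)
qed

lemma null_space_if_escaping:
  assumes null: "space M - D \<in> null_sets \<mu>"
    and escaping: "\<And>x. x \<in> space M \<Longrightarrow> \<exists>k\<in>I. \<exists>n. (g k ^^ n) x \<notin> D"
  shows "space M \<in> null_sets \<mu>"
proof (rule null_sets_subset)
  have "(\<Union>n. (g k ^^ n) -` (space M - D) \<inter> space M) \<in> null_sets \<mu>" if "k \<in> I" for k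
    using null_sets_vimage_funpow[OF null that] by (rule null_sets_UN)
  then show "(\<Union>k\<in>I. \<Union>n. (g k ^^ n) -` (space M - D) \<inter> space M) \<in> null_sets \<mu>"
    by (rule null_sets_UN'[OF countable_finite[OF finite_I]])
  show "space M \<subseteq> (\<Union>k\<in>I. \<Union>n. (g k ^^ n) -` (space M - D) \<inter> space M)"
  proof
    fix x assume x: "x \<in> space M"
    then obtain k n where k: "k \<in> I" and "(g k ^^ n) x \<notin> D"
      using escaping by blast
    moreover have "(g k ^^ n) x \<in> space M"
      using measurable_space[OF measurable_compose_n[OF g_measurable[OF k]] x] .
    ultimately show "x \<in> (\<Union>k\<in>I. \<Union>n. (g k ^^ n) -` (space M - D) \<inter> space M)"
      using x by auto
  qed
qed (simp flip: space_\<mu>)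

end

section \<open>Ping-pong weights\<close>

text \<open>\<open>C j\<close> is the set of points whose reduced word ends with the letter \<open>j\<close>, and \<open>g (flip j)\<close>
  deletes that letter.  Since \<open>E\<close> drops by at least 1 with each deletion, \<open>depth\<close> bounds the
  word length, and \<open>weight z\<close> is the product of \<open>\<rho>\<close> over the letters of the word of \<open>z\<close>.\<close>
locale pingpong =
  fixes I :: "'i set" and flip :: "'i \<Rightarrow> 'i" and g :: "'i \<Rightarrow> 'a::topological_space \<Rightarrow> 'a"
    and C :: "'i \<Rightarrow> 'a set" and E :: "'a \<Rightarrow> real" and \<rho> :: "'i \<Rightarrow> real"
  assumes finite_I: "finite I"
    and flip_in: "j \<in> I \<Longrightarrow> flip j \<in> I"
    and g_measurable: "j \<in> I \<Longrightarrow> g j \<in> borel_measurable borel"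
    and C_sets: "j \<in> I \<Longrightarrow> C j \<in> sets borel"
    and C_disjoint: "j \<in> I \<Longrightarrow> k \<in> I \<Longrightarrow> j \<noteq> k \<Longrightarrow> C j \<inter> C k = {}"
    and g_flip_cancel: "j \<in> I \<Longrightarrow> g (flip j) (g j z) = z"
    and g_maps_C: "j \<in> I \<Longrightarrow> k \<in> I \<Longrightarrow> k \<noteq> flip j \<Longrightarrow> z \<in> C j \<Longrightarrow> g k z \<in> C k"
    and E_nonneg: "0 \<le> E z"
    and E_decreasing: "j \<in> I \<Longrightarrow> z \<in> C j \<Longrightarrow> E (g (flip j) z) \<le> E z - 1"
    and \<rho>_bounds: "j \<in> I \<Longrightarrow> 0 < \<rho> j \<and> \<rho> j < 1"
begin

primrec weight_approx :: "nat \<Rightarrow> 'a \<Rightarrow> real" where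
  "weight_approx 0 z = 1"
| "weight_approx (Suc n) z =
    (\<Sum>j\<in>I. indicator (C j) z * (\<rho> j * weight_approx n (g (flip j) z)))
    + indicator (- (\<Union>j\<in>I. C j)) z"

definition depth :: "'a \<Rightarrow> nat" where
  "depth z = nat \<lceil>E z\<rceil>"

definition weight :: "'a \<Rightarrow> real" where
  "weight z = weight_approx (depth z) z"

lemma weight_approx_Suc_in_C:
  assumes "j \<in> I" "z \<in> C j"
  shows "weight_approx (Suc n) z = \<rho> j * weight_approx n (g (flip j) z)"
proof -
  have "z \<notin> C k" if "k \<in> I" "k \<noteq> j" for k
    using C_disjoint[OF that(1) assms(1) that(2)] assms(2) by blast
  then have "(\<Sum>k\<in>I. indicator (C k) z * (\<rho> k * weight_approx n (g (flip k) z)))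
      = (\<Sum>k\<in>{j}. indicator (C k) z * (\<rho> k * weight_approx n (g (flip k) z)))"
    using assms(1) finite_I by (intro sum.mono_neutral_right) auto
  moreover have "indicator (- (\<Union>k\<in>I. C k)) z = (0::real)"
    using assms by (auto simp: indicator_def)
  ultimately show ?thesis
    using assms by simp
qed

lemma weight_approx_outside_C:
  assumes "z \<notin> (\<Union>j\<in>I. C j)"
  shows "weight_approx n z = 1"
  using assms by (cases n) simp_all

lemma weight_approx_bounds: "0 < weight_approx n z \<and> weight_approx n z \<le> 1"
proof (induction n arbitrary: z)
  case (Suc n)
  show ?case
  proof (cases "z \<in> (\<Union>j\<in>I. C j)")
    case True
    then obtain j where j: "j \<in> I" "z \<in> C j" by blast
    show ?thesis
      unfolding weight_approx_Suc_in_C[OF j]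
      using \<rho>_bounds[OF j(1)] Suc.IH[of "g (flip j) z"] by (auto intro: mult_le_one)
  qed (simp add: weight_approx_outside_C)
qed simp

lemma depth_decreasing:
  assumes "j \<in> I" "z \<in> C j"
  shows "depth (g (flip j) z) < depth z"
proof -
  have "\<lceil>E (g (flip j) z)\<rceil> \<le> \<lceil>E z\<rceil> - 1"
    using E_decreasing[OF assms] by (metis ceiling_diff_one ceiling_mono)
  moreover have "0 \<le> \<lceil>E (g (flip j) z)\<rceil>"
    using E_nonneg[of "g (flip j) z"] by simp
  ultimately show ?thesis
    unfolding depth_def by linarith
qed

lemma weight_approx_stable:
  assumes "depth z \<le> n" "depth z \<le> m"
  shows "weight_approx n z = weight_approx m z"
  using assms
proof (induction n arbitrary: m z)
  case 0
  then have "z \<notin> (\<Union>j\<in>I. C j)"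
    using depth_decreasing by fastforce
  then show ?case
    by (simp add: weight_approx_outside_C)
next
  case (Suc n)
  show ?case
  proof (cases "z \<in> (\<Union>j\<in>I. C j)")
    case True
    then obtain j where j: "j \<in> I" "z \<in> C j" by blast
    with Suc.prems obtain m' where m': "m = Suc m'"
      using depth_decreasing by (cases m) fastforce+
    have "weight_approx n (g (flip j) z) = weight_approx m' (g (flip j) z)"
      using Suc.IH[of "g (flip j) z" m'] Suc.prems depth_decreasing[OF j] m' by simp
    then show ?thesis
      by (simp only: m' weight_approx_Suc_in_C[OF j])
  qed (simp add: weight_approx_outside_C)
qed

lemma weight_eq_approx: "depth z \<le> n \<Longrightarrow> weight z = weight_approx n z"
  unfolding weight_def by (rule weight_approx_stable) simp_all

lemma weight_in_C:
  assumes "j \<in> I" "z \<in> C j"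
  shows "weight z = \<rho> j * weight (g (flip j) z)"
proof -
  let ?n = "depth z + depth (g (flip j) z)"
  have "weight z = weight_approx (Suc ?n) z"
    by (rule weight_eq_approx) simp
  also have "\<dots> = \<rho> j * weight_approx ?n (g (flip j) z)"
    by (rule weight_approx_Suc_in_C[OF assms])
  also have "weight_approx ?n (g (flip j) z) = weight (g (flip j) z)"
    by (rule weight_eq_approx[symmetric]) simp
  finally show ?thesis .
qed

lemma weight_outside_C: "z \<notin> (\<Union>j\<in>I. C j) \<Longrightarrow> weight z = 1"
  unfolding weight_def by (rule weight_approx_outside_C)

lemma weight_bounds: "0 < weight z \<and> weight z \<le> 1"
  unfolding weight_def by (rule weight_approx_bounds)

lemma weight_measurable: "weight \<in> borel_measurable borel"
proof (rule borel_measurable_LIMSEQ_real)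
  show "weight_approx n \<in> borel_measurable borel" for n
  proof (induction n)
    case (Suc n)
    have "(\<lambda>z. weight_approx n (g (flip j) z)) \<in> borel_measurable borel" if "j \<in> I" for j
      using measurable_compose[OF g_measurable[OF flip_in[OF that]] Suc] .
    moreover have "- (\<Union>j\<in>I. C j) \<in> sets borel"
      using C_sets finite_I by (intro borel_comp sets.finite_UN) auto
    ultimately show ?case
      using C_sets by (auto intro!: borel_measurable_add borel_measurable_sum borel_measurable_times)
  qed simp
  show "(\<lambda>n. weight_approx n z) \<longlonglongrightarrow> weight z" for z
    using weight_eq_approx[of z]
    by (intro tendsto_eventually eventually_sequentiallyI[of "depth z"]) simp
qed

context
  fixes a :: "'i \<Rightarrow> real"
  assumes a_pos: "\<And>k. k \<in> I \<Longrightarrow> 0 < a k" and a_sum: "(\<Sum>k\<in>I. a k) = 1"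
    and contracting: "\<And>j. j \<in> I \<Longrightarrow> (\<Sum>k\<in>I - {flip j}. a k * \<rho> k) + a (flip j) / \<rho> j < 1"
begin

lemma weight_average_le_1: "(\<Sum>k\<in>I. a k * weight (g k z)) \<le> 1"
proof -
  have "(\<Sum>k\<in>I. a k * weight (g k z)) \<le> (\<Sum>k\<in>I. a k)"
    using a_pos weight_bounds by (intro sum_mono) (simp add: mult_left_le less_imp_le)
  then show ?thesis
    using a_sum by simp
qed

text \<open>On \<open>C j\<close> the weight scales by \<open>\<rho> k\<close> along every letter \<open>k \<noteq> flip j\<close> and by \<open>1 / \<rho> j\<close>
  along \<open>flip j\<close>, so the average is the left-hand side of \<open>contracting\<close> times the weight.\<close>
lemma weight_average_less_in_C:
  assumes j: "j \<in> I" "z \<in> C j"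
  shows "(\<Sum>k\<in>I. a k * weight (g k z)) < weight z"
proof -
  have forward: "weight (g k z) = \<rho> k * weight z" if "k \<in> I" "k \<noteq> flip j" for k
    using weight_in_C[OF that(1) g_maps_C[OF j(1) that j(2)]] g_flip_cancel[OF that(1)] by simp
  have backward: "weight (g (flip j) z) = weight z / \<rho> j"
    using weight_in_C[OF j] \<rho>_bounds[OF j(1)] by (simp add: field_simps)
  have "(\<Sum>k\<in>I. a k * weight (g k z))
      = a (flip j) * weight (g (flip j) z) + (\<Sum>k\<in>I - {flip j}. a k * weight (g k z))"
    using finite_I flip_in[OF j(1)] by (rule sum.remove)
  also have "(\<Sum>k\<in>I - {flip j}. a k * weight (g k z)) = (\<Sum>k\<in>I - {flip j}. a k * \<rho> k) * weight z"
    unfolding sum_distrib_right by (intro sum.cong) (auto simp: forward)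
  also have "a (flip j) * weight (g (flip j) z) + (\<Sum>k\<in>I - {flip j}. a k * \<rho> k) * weight z
      = ((\<Sum>k\<in>I - {flip j}. a k * \<rho> k) + a (flip j) / \<rho> j) * weight z"
    by (simp add: backward algebra_simps)
  also have "\<dots> < 1 * weight z"
    using contracting[OF j(1)] weight_bounds by (intro mult_strict_right_mono) auto
  finally show ?thesis by simp
qed

lemma weight_average_less_entering:
  assumes "z \<notin> (\<Union>j\<in>I. C j)" and k: "k \<in> I" "g k z \<in> C k"
  shows "(\<Sum>k\<in>I. a k * weight (g k z)) < weight z"
proof -
  have "weight (g k z) = \<rho> k"
    using weight_in_C[OF k] g_flip_cancel[OF k(1)] weight_outside_C[OF assms(1)] by simp
  then have "a k * weight (g k z) < a k"
    using a_pos[OF k(1)] \<rho>_bounds[OF k(1)] by simp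
  moreover have "(\<Sum>i\<in>I - {k}. a i * weight (g i z)) \<le> (\<Sum>i\<in>I - {k}. a i)"
    using a_pos weight_bounds by (intro sum_mono) (simp add: mult_left_le less_imp_le)
  ultimately have "(\<Sum>i\<in>I. a i * weight (g i z)) < (\<Sum>i\<in>I. a i)"
    using finite_I k(1) by (simp add: sum.remove)
  then show ?thesis
    using a_sum weight_outside_C[OF assms(1)] by simp
qed

theorem weight_superharmonic: "(\<Sum>k\<in>I. a k * weight (g k z)) \<le> weight z"
proof (cases "z \<in> (\<Union>j\<in>I. C j)")
  case True
  then show ?thesis
    using weight_average_less_in_C by (auto intro: less_imp_le)
qed (simp add: weight_outside_C weight_average_le_1)

theorem weight_strictly_superharmonic:
  assumes "(\<exists>j\<in>I. z \<in> C j) \<or> (\<exists>k\<in>I. g k z \<in> C k)"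
  shows "(\<Sum>k\<in>I. a k * weight (g k z)) < weight z"
  using assms weight_average_less_in_C weight_average_less_entering by blast

end

end

section \<open>Henon maps and rotations\<close>

lemma sin_cos_nonzero:
  assumes "\<theta> \<in> {0<..<2*pi} - {pi/2, pi, 3*pi/2}"
  shows "sin \<theta> \<noteq> 0" "cos \<theta> \<noteq> 0"
proof -
  have t: "0 < \<theta>" "\<theta> < 2*pi" "\<theta> \<noteq> pi/2" "\<theta> \<noteq> pi" "\<theta> \<noteq> 3*pi/2" using assms by auto
  show "sin \<theta> \<noteq> 0"
  proof
    assume "sin \<theta> = 0"
    then obtain i :: int where i: "\<theta> = of_int i * pi" using sin_zero_iff_int2 by blast
    have "0 < of_int i * pi" "of_int i * pi < 2 * pi" using t i by auto
    then have "0 < (of_int i :: real)" "(of_int i :: real) < 2" using pi_gt_zero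
      by (simp_all add: zero_less_mult_iff mult_less_cancel_right)
    then have "i = 1" by linarith
    then show False using t i by simp
  qed
  show "cos \<theta> \<noteq> 0"
  proof
    assume "cos \<theta> = 0"
    then obtain n :: int where n: "\<theta> = of_int n * pi + pi/2" using cos_zero_iff_int2 by blast
    have "0 < (of_int n + 1/2) * pi" "(of_int n + 1/2) * pi < 2 * pi" using t n by (auto simp: algebra_simps)
    then have "0 < of_int n + (1/2::real)" "of_int n + 1/2 < (2::real)" using pi_gt_zero
      by (simp_all add: zero_less_mult_iff mult_less_cancel_right)
    then have "n = 0 \<or> n = 1" by linarith
    then show False using t n by (auto simp: algebra_simps)
  qed
qed

lemma filled_juliaI:
  assumes "bounded S" and "\<And>n. (h ^^ n) z \<in> S" and "\<And>n. (inv h ^^ n) z \<in> S"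
  shows "z \<in> filled_julia h"
proof -
  have "range (\<lambda>n::int. int_iter h n z) \<subseteq> S"
    using assms(2,3) by (auto simp: int_iter_def)
  then show ?thesis
    using assms(1) by (auto simp: filled_julia_def intro: bounded_subset)
qed

definition henon_inv :: "complex poly \<Rightarrow> complex \<Rightarrow> complex \<times> complex \<Rightarrow> complex \<times> complex" where
  "henon_inv P \<delta> = (\<lambda>(x, y). ((poly P x - y) / \<delta>, x))"

lemma henon_inv_henon: "\<delta> \<noteq> 0 \<Longrightarrow> henon_inv P \<delta> (henon P \<delta> z) = z"
  by (cases z) (simp add: henon_def henon_inv_def)

lemma henon_henon_inv: "\<delta> \<noteq> 0 \<Longrightarrow> henon P \<delta> (henon_inv P \<delta> z) = z"
  by (cases z) (simp add: henon_def henon_inv_def)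

lemma rot_uminus_rot: "rot (-\<phi>) (rot \<phi> z) = z"
proof -
  let ?one = "of_real (cos \<phi>) * of_real (cos \<phi>) + of_real (sin \<phi>) * of_real (sin \<phi>) :: complex"
  have "?one = 1"
    by (metis of_real_mult of_real_add of_real_1 sin_cos_squared_add power2_eq_square add.commute)
  moreover have "rot (-\<phi>) (rot \<phi> z) = (?one * fst z, ?one * snd z)"
    by (cases z) (simp add: rot_def algebra_simps)
  ultimately show ?thesis
    by simp
qed

lemma rot_rot_uminus: "rot \<phi> (rot (-\<phi>) z) = z"
  using rot_uminus_rot[of "-\<phi>" z] by simp

lemma inv_rot: "inv (rot \<phi>) = rot (-\<phi>)"
  by (rule inv_unique_comp) (auto simp: fun_eq_iff rot_uminus_rot rot_rot_uminus)

lemma norm_rot: "norm (rot \<phi> z) = norm z"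
proof -
  obtain x y where z: "z = (x, y)" by (cases z)
  let ?c = "cos \<phi>" and ?s = "sin \<phi>"
  have "(?c * Re x - ?s * Re y)\<^sup>2 + (?c * Im x - ?s * Im y)\<^sup>2 + ((?s * Re x + ?c * Re y)\<^sup>2 + (?s * Im x + ?c * Im y)\<^sup>2)
      = ((Re x)\<^sup>2 + (Im x)\<^sup>2) + ((Re y)\<^sup>2 + (Im y)\<^sup>2)"
    using sin_cos_squared_add[of \<phi>] by algebra
  then show ?thesis
    unfolding z rot_def by (simp add: norm_Pair cmod_power2)
qed

lemma henon_measurable: "henon P \<delta> \<in> borel_measurable borel"
proof -
  have "henon P \<delta> = (\<lambda>z. (snd z, poly P (snd z) - \<delta> * fst z))"
    by (auto simp: henon_def fun_eq_iff)
  then show ?thesis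
    by (auto intro!: borel_measurable_continuous_onI continuous_intros)
qed

lemma henon_inv_measurable: "henon_inv P \<delta> \<in> borel_measurable borel"
proof -
  have "henon_inv P \<delta> = (\<lambda>z. ((poly P (fst z) - snd z) * inverse \<delta>, fst z))"
    by (auto simp: henon_inv_def fun_eq_iff divide_inverse)
  then show ?thesis
    by (auto intro!: borel_measurable_continuous_onI continuous_intros)
qed

lemma rot_measurable: "rot \<phi> \<in> borel_measurable borel"
proof -
  have "rot \<phi> = (\<lambda>z. (of_real (cos \<phi>) * fst z - of_real (sin \<phi>) * snd z,
                        of_real (sin \<phi>) * fst z + of_real (cos \<phi>) * snd z))"
    by (auto simp: rot_def fun_eq_iff)
  then show ?thesis
    by (auto intro!: borel_measurable_continuous_onI continuous_intros)
qed

lemma poly_escape: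
  fixes Q :: "'a::{comm_ring_1, real_normed_div_algebra} poly" and K B :: real
  assumes "2 \<le> degree Q"
  shows "\<exists>R\<ge>1. \<forall>x y. R \<le> norm x \<longrightarrow> norm (y - poly Q x) \<le> K * norm x \<longrightarrow> B * norm x \<le> norm y"
proof -
  obtain a b Q2 where Q: "Q = pCons a (pCons b Q2)"
    by (metis pCons_cases)
  have "Q2 \<noteq> 0"
    using assms by (auto simp: Q split: if_split_asm)
  obtain r where r: "\<And>x. r \<le> norm x \<Longrightarrow> B + K + norm a + 1 \<le> norm (poly (pCons b Q2) x)"
    using poly_infinity[OF \<open>Q2 \<noteq> 0\<close>] by blast
  show ?thesis
  proof (intro exI[of _ "max r 1"] conjI allI impI)
    fix x y :: 'a
    assume x: "max r 1 \<le> norm x" and y: "norm (y - poly Q x) \<le> K * norm x"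
    have "norm a \<le> norm a * norm x"
      using x by (simp add: mult_le_cancel_left1)
    then have "(B + K) * norm x + norm a \<le> norm x * (B + K + norm a + 1)"
      using x by (simp add: algebra_simps)
    also have "\<dots> \<le> norm (x * poly (pCons b Q2) x)"
      using r x by (simp add: norm_mult mult_left_mono)
    also have "\<dots> \<le> norm (poly Q x) + norm a"
      using norm_triangle_ineq4[of "poly Q x" a] by (simp add: Q)
    also have "norm (poly Q x) \<le> norm y + K * norm x"
      using norm_triangle_ineq4[of y "y - poly Q x"] y by simp
    finally show "B * norm x \<le> norm y"
      by (simp add: algebra_simps)
  qed simp
qed

lemma norm_dominant_sum_bounds:
  fixes x y :: complex and c d m :: real
  assumes "m \<le> \<bar>c\<bar>" "\<bar>c\<bar> \<le> 1" "\<bar>d\<bar> \<le> 1" "norm x \<le> m / 2 * norm y"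
  shows "m / 2 * norm y \<le> norm (of_real c * y + of_real d * x)
    \<and> norm (of_real c * y + of_real d * x) \<le> 2 * norm y"
proof -
  have "\<bar>d\<bar> * norm x \<le> m / 2 * norm y"
    using assms(3,4) by (meson mult_left_le_one_le norm_ge_zero abs_ge_zero order_trans)
  moreover have "m * norm y \<le> \<bar>c\<bar> * norm y" "\<bar>c\<bar> * norm y \<le> norm y"
    using assms(1,2) by (auto intro: mult_right_mono mult_left_le_one_le)
  moreover have "norm (of_real c * y) - norm (of_real d * x) \<le> norm (of_real c * y + of_real d * x)"
    by (rule norm_diff_ineq)
  moreover have "norm (of_real c * y + of_real d * x) \<le> norm (of_real c * y) + norm (of_real d * x)"
    by (rule norm_triangle_ineq)
  moreover have "m \<le> 1" using assms(1,2) by linarith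
  ultimately show ?thesis
    by (simp add: norm_mult)
qed

section \<open>Ping-pong for a Henon map and its rotated conjugate\<close>

datatype letter = H1 | H2 | H1_inv | H2_inv

primrec letter_flip :: "letter \<Rightarrow> letter" where
  "letter_flip H1 = H1_inv"
| "letter_flip H2 = H2_inv"
| "letter_flip H1_inv = H1"
| "letter_flip H2_inv = H2"

lemma UNIV_letter: "UNIV = {H1, H2, H1_inv, H2_inv}"
  using letter.exhaust by auto

instance letter :: finite
  by standard (simp add: UNIV_letter)

lemma sum_letters: "(\<Sum>k\<in>UNIV. f k) = f H1 + f H2 + f H1_inv + f H2_inv"
  by (simp add: UNIV_letter add.assoc)

locale henon_pair =
  fixes P :: "complex poly" and \<delta> :: complex and \<theta> :: real
  assumes degree_P: "2 \<le> degree P" and \<delta>_nonzero: "\<delta> \<noteq> 0"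
    and sin_nonzero: "sin \<theta> \<noteq> 0" and cos_nonzero: "cos \<theta> \<noteq> 0"
begin

definition margin :: real where
  "margin = min \<bar>sin \<theta>\<bar> \<bar>cos \<theta>\<bar>"

definition slope :: real where
  "slope = 4 / margin"

lemma margin_pos: "0 < margin"
  using sin_nonzero cos_nonzero by (simp add: margin_def)

lemma margin_le: "margin \<le> \<bar>sin \<theta>\<bar>" "margin \<le> \<bar>cos \<theta>\<bar>"
  by (simp_all add: margin_def)

lemma margin_le_1: "margin \<le> 1"
  using margin_le(1) abs_sin_le_one order_trans by blast

lemma slope_ge_4: "4 \<le> slope"
  using margin_pos margin_le_1 by (simp add: slope_def field_simps)

lemma two_div_margin_le: "2 / margin \<le> slope + 3"
  using margin_pos by (simp add: slope_def field_simps)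

definition escapes_beyond :: "real \<Rightarrow> bool" where
  "escapes_beyond R \<longleftrightarrow> 1 \<le> R
     \<and> (\<forall>x y. R \<le> norm x \<longrightarrow> norm (y - poly P x) \<le> slope * norm \<delta> * norm x
          \<longrightarrow> (slope + 3) * norm x \<le> norm y)
     \<and> (\<forall>x y. R \<le> norm y \<longrightarrow> norm (\<delta> * x - poly P y) \<le> slope * norm y
          \<longrightarrow> (slope + 3) * norm y \<le> norm x)"

lemma escapes_beyond_exists: "\<exists>R. escapes_beyond R"
proof -
  obtain R1 where R1: "1 \<le> R1" "\<forall>x y. R1 \<le> norm x \<longrightarrow> norm (y - poly P x) \<le> slope * norm \<delta> * norm x
      \<longrightarrow> (slope + 3) * norm x \<le> norm y"
    using poly_escape[OF degree_P] by blast
  have "2 \<le> degree (smult (1 / \<delta>) P)"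
    using degree_P \<delta>_nonzero by simp
  then obtain R2 where R2: "1 \<le> R2" "\<forall>x y. R2 \<le> norm y \<longrightarrow> norm (x - poly (smult (1 / \<delta>) P) y) \<le> slope / norm \<delta> * norm y
      \<longrightarrow> (slope + 3) * norm y \<le> norm x"
    using poly_escape by blast
  have "x - poly (smult (1 / \<delta>) P) y = (\<delta> * x - poly P y) / \<delta>" for x y
    using \<delta>_nonzero by (simp add: field_simps)
  then have "norm (x - poly (smult (1 / \<delta>) P) y) = norm (\<delta> * x - poly P y) / norm \<delta>" for x y
    by (simp add: norm_divide)
  then have "\<forall>x y. max R1 R2 \<le> norm y \<longrightarrow> norm (\<delta> * x - poly P y) \<le> slope * norm y
      \<longrightarrow> (slope + 3) * norm y \<le> norm x"
    using R2(2) \<delta>_nonzero by (auto simp: divide_right_mono)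
  with R1 show ?thesis
    unfolding escapes_beyond_def by (intro exI[of _ "max R1 R2"]) auto
qed

definition escape_radius :: real where
  "escape_radius = (SOME R. escapes_beyond R)"

lemma escape_radius:
  shows escape_radius_ge_1: "1 \<le> escape_radius"
    and escape_forward: "\<lbrakk>escape_radius \<le> norm x; norm (y - poly P x) \<le> slope * norm \<delta> * norm x\<rbrakk>
      \<Longrightarrow> (slope + 3) * norm x \<le> norm y"
    and escape_backward: "\<lbrakk>escape_radius \<le> norm y; norm (\<delta> * x - poly P y) \<le> slope * norm y\<rbrakk>
      \<Longrightarrow> (slope + 3) * norm y \<le> norm x"
  using someI_ex[OF escapes_beyond_exists, folded escape_radius_def]
  unfolding escapes_beyond_def by blast+

text \<open>\<open>vcone\<close> (nearly vertical) contains the image of \<open>balanced\<close> under \<open>h\<^sub>1\<close> and \<open>hcone\<close> (nearly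
  horizontal) its image under \<open>h\<^sub>1\<^sup>-\<^sup>1\<close>.  The aperture \<open>slope\<close> is what rotation by \<open>\<plusminus>\<theta>\<close> needs to
  map both cones into \<open>balanced\<close>; the extra 3 in \<open>slope + 3\<close> pays for the norm drop by 1.\<close>
definition vcone :: "(complex \<times> complex) set" where
  "vcone = {(x, y). escape_radius \<le> norm x \<and> norm (y - poly P x) \<le> slope * norm \<delta> * norm x}"

definition hcone :: "(complex \<times> complex) set" where
  "hcone = {(x, y). escape_radius \<le> norm y \<and> norm (\<delta> * x - poly P y) \<le> slope * norm y}"

definition balanced :: "(complex \<times> complex) set" where
  "balanced = {(x, y). escape_radius \<le> norm x \<and> escape_radius \<le> norm y
     \<and> norm x \<le> slope * norm y \<and> norm y \<le> slope * norm x}"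

lemma vcone_steep:
  "(x, y) \<in> vcone \<Longrightarrow> escape_radius \<le> norm x \<and> (slope + 3) * norm x \<le> norm y"
  unfolding vcone_def using escape_forward by auto

lemma hcone_flat:
  "(x, y) \<in> hcone \<Longrightarrow> escape_radius \<le> norm y \<and> (slope + 3) * norm y \<le> norm x"
  unfolding hcone_def using escape_backward by auto

lemma henon_in_vcone:
  assumes "norm x \<le> slope * norm y" "escape_radius \<le> norm y"
  shows "henon P \<delta> (x, y) \<in> vcone"
proof -
  have "norm \<delta> * norm x \<le> norm \<delta> * (slope * norm y)"
    using assms(1) by (rule mult_left_mono) simp
  then show ?thesis
    using assms(2) by (simp add: vcone_def henon_def norm_mult algebra_simps)
qed

lemma henon_inv_in_hcone:
  assumes "norm y \<le> slope * norm x" "escape_radius \<le> norm x"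
  shows "henon_inv P \<delta> (x, y) \<in> hcone"
  using assms \<delta>_nonzero by (simp add: hcone_def henon_inv_def norm_minus_commute)

lemma henon_balanced: "z \<in> balanced \<Longrightarrow> henon P \<delta> z \<in> vcone"
  by (cases z) (simp add: balanced_def henon_in_vcone)

lemma henon_inv_balanced: "z \<in> balanced \<Longrightarrow> henon_inv P \<delta> z \<in> hcone"
  by (cases z) (simp add: balanced_def henon_inv_in_hcone)

lemma steep_bounds:
  assumes "escape_radius \<le> t" "(slope + 3) * t \<le> s"
  shows "escape_radius \<le> s \<and> t \<le> slope * s \<and> slope * t < s"
proof -
  have "0 < t" using assms(1) escape_radius_ge_1 by linarith
  then have "t \<le> (slope + 3) * t" "slope * t < (slope + 3) * t"
    using slope_ge_4 by (simp_all add: field_simps)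
  then have "0 < s" "escape_radius \<le> s" "slope * t < s"
    using assms \<open>0 < t\<close> by linarith+
  moreover have "s \<le> slope * s"
    using slope_ge_4 \<open>0 < s\<close> by simp
  ultimately show ?thesis
    using assms \<open>t \<le> (slope + 3) * t\<close> by linarith
qed

lemma henon_vcone: "z \<in> vcone \<Longrightarrow> henon P \<delta> z \<in> vcone"
proof (cases z)
  case (Pair x y)
  assume "z \<in> vcone"
  then show ?thesis
    using vcone_steep[of x y] steep_bounds[of "norm x" "norm y"] Pair
    by (auto intro!: henon_in_vcone)
qed

lemma henon_inv_hcone: "z \<in> hcone \<Longrightarrow> henon_inv P \<delta> z \<in> hcone"
proof (cases z)
  case (Pair x y)
  assume "z \<in> hcone"
  then show ?thesis
    using hcone_flat[of x y] steep_bounds[of "norm y" "norm x"] Pair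
    by (auto intro!: henon_inv_in_hcone)
qed

lemma vcone_balanced_disjoint: "vcone \<inter> balanced = {}"
proof -
  have "(x, y) \<notin> balanced" if "(x, y) \<in> vcone" for x y
    using vcone_steep[OF that] steep_bounds[of "norm x" "norm y"] by (auto simp: balanced_def)
  then show ?thesis by auto
qed

lemma hcone_balanced_disjoint: "hcone \<inter> balanced = {}"
proof -
  have "(x, y) \<notin> balanced" if "(x, y) \<in> hcone" for x y
    using hcone_flat[OF that] steep_bounds[of "norm y" "norm x"] by (auto simp: balanced_def)
  then show ?thesis by auto
qed

lemma vcone_hcone_disjoint: "vcone \<inter> hcone = {}"
proof -
  have "(x, y) \<notin> hcone" if "(x, y) \<in> vcone" for x y
  proof
    assume "(x, y) \<in> hcone"
    then have "slope * norm y < norm x"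
      using hcone_flat steep_bounds[of "norm y" "norm x"] by auto
    moreover have "slope * norm x < norm y"
      using vcone_steep[OF that] steep_bounds[of "norm x" "norm y"] by auto
    moreover have "norm x \<le> slope * norm x" "norm y \<le> slope * norm y"
      using slope_ge_4 by (simp_all add: mult_le_cancel_right1)
    ultimately show False by linarith
  qed
  then show ?thesis by auto
qed

lemma norm_henon_inv_vcone:
  assumes "z \<in> vcone"
  shows "norm (henon_inv P \<delta> z) \<le> norm z - 1"
proof -
  obtain x y where z: "z = (x, y)" by (cases z)
  have xy: "(x, y) \<in> vcone" using assms z by simp
  have "norm ((poly P x - y) / \<delta>) = norm (y - poly P x) / norm \<delta>"
    by (simp add: norm_divide norm_minus_commute)
  also have "\<dots> \<le> slope * norm x"
    using xy \<delta>_nonzero by (simp add: vcone_def divide_le_eq algebra_simps)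
  finally have "norm (henon_inv P \<delta> z) \<le> (slope + 1) * norm x"
    using norm_Pair_le[of "(poly P x - y) / \<delta>" x] by (simp add: z henon_inv_def algebra_simps)
  also have "\<dots> \<le> (slope + 3) * norm x - 1"
    using vcone_steep[OF xy] escape_radius_ge_1 by (simp add: algebra_simps)
  also have "\<dots> \<le> norm z - 1"
    using vcone_steep[OF xy] norm_snd_le[of y x] by (simp add: z)
  finally show ?thesis .
qed

lemma norm_henon_hcone:
  assumes "z \<in> hcone"
  shows "norm (henon P \<delta> z) \<le> norm z - 1"
proof -
  obtain x y where z: "z = (x, y)" by (cases z)
  have xy: "(x, y) \<in> hcone" using assms z by simp
  have "norm (henon P \<delta> z) \<le> norm y + norm (poly P y - \<delta> * x)"
    using norm_Pair_le[of y "poly P y - \<delta> * x"] by (simp add: z henon_def)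
  also have "\<dots> \<le> (slope + 1) * norm y"
    using xy by (simp add: hcone_def norm_minus_commute algebra_simps)
  also have "\<dots> \<le> (slope + 3) * norm y - 1"
    using hcone_flat[OF xy] escape_radius_ge_1 by (simp add: algebra_simps)
  also have "\<dots> \<le> norm z - 1"
    using hcone_flat[OF xy] norm_fst_le[of x y] by (simp add: z)
  finally show ?thesis .
qed

lemma outside_ball_enters_cone:
  assumes "2 * escape_radius < norm z"
  shows "henon P \<delta> z \<in> vcone \<or> henon_inv P \<delta> z \<in> hcone"
proof -
  obtain x y where z: "z = (x, y)" by (cases z)
  have "2 * escape_radius < norm x + norm y"
    using assms norm_Pair_le[of x y] by (simp add: z)
  moreover have "norm x \<le> slope * norm x" "norm y \<le> slope * norm y"
    using slope_ge_4 by (simp_all add: mult_le_cancel_right1)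
  ultimately show ?thesis
    unfolding z using henon_in_vcone[of x y] henon_inv_in_hcone[of y x] by fastforce
qed

lemma balancedI:
  assumes "margin / 2 * t \<le> norm u" "norm u \<le> 2 * t" "margin / 2 * t \<le> norm v" "norm v \<le> 2 * t"
    and "2 * escape_radius / margin \<le> t"
  shows "(u, v) \<in> balanced"
proof -
  have "escape_radius \<le> margin / 2 * t"
    using assms(5) margin_pos by (simp add: field_simps)
  moreover have "2 * t = slope * (margin / 2 * t)"
    using margin_pos by (simp add: slope_def)
  moreover have "slope * (margin / 2 * t) \<le> slope * norm u" "slope * (margin / 2 * t) \<le> slope * norm v"
    using assms(1,3) slope_ge_4 by simp_all
  ultimately have "escape_radius \<le> norm u" "escape_radius \<le> norm v"
    "norm u \<le> slope * norm v" "norm v \<le> slope * norm u"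
    using assms(1-4) by linarith+
  then show ?thesis
    by (simp add: balanced_def)
qed

text \<open>This is where \<open>sin \<theta> \<noteq> 0\<close> and \<open>cos \<theta> \<noteq> 0\<close> are used.\<close>
lemma rot_cone_balanced:
  assumes "z \<in> vcone \<union> hcone" and "\<phi> = \<theta> \<or> \<phi> = -\<theta>"
  shows "rot \<phi> z \<in> balanced"
proof -
  obtain x y where z: "z = (x, y)" by (cases z)
  have trig: "margin \<le> \<bar>sin \<phi>\<bar>" "\<bar>sin \<phi>\<bar> \<le> 1" "margin \<le> \<bar>cos \<phi>\<bar>" "\<bar>cos \<phi>\<bar> \<le> 1"
    using assms(2) margin_le by auto
  have rot_xy: "rot \<phi> (x, y) = (of_real (-sin \<phi>) * y + of_real (cos \<phi>) * x,
                                of_real (cos \<phi>) * y + of_real (sin \<phi>) * x)"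
               "rot \<phi> (x, y) = (of_real (cos \<phi>) * x + of_real (-sin \<phi>) * y,
                                of_real (sin \<phi>) * x + of_real (cos \<phi>) * y)"
    by (simp_all add: rot_def algebra_simps)
  have large: "2 * escape_radius / margin \<le> s" and small: "t \<le> margin / 2 * s"
    if "escape_radius \<le> t" "(slope + 3) * t \<le> s" for s t
  proof -
    have "0 \<le> t" using that(1) escape_radius_ge_1 by linarith
    then have "2 / margin * t \<le> s"
      using two_div_margin_le that(2) by (meson mult_right_mono order_trans)
    moreover have "2 / margin * escape_radius \<le> 2 / margin * t"
      using that(1) margin_pos by (intro mult_left_mono) auto
    ultimately show "2 * escape_radius / margin \<le> s" "t \<le> margin / 2 * s"
      using margin_pos by (simp_all add: field_simps)
  qed
  show ?thesis
  proof (cases "z \<in> vcone")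
    case True
    then have xy: "escape_radius \<le> norm x" "(slope + 3) * norm x \<le> norm y"
      using vcone_steep z by auto
    show ?thesis
      unfolding z rot_xy(1) using trig small[OF xy] large[OF xy]
      by (intro balancedI[where t = "norm y"] norm_dominant_sum_bounds[THEN conjunct1]
          norm_dominant_sum_bounds[THEN conjunct2]) auto
  next
    case False
    then have xy: "escape_radius \<le> norm y" "(slope + 3) * norm y \<le> norm x"
      using assms(1) hcone_flat z by auto
    show ?thesis
      unfolding z rot_xy(2) using trig small[OF xy] large[OF xy]
      by (intro balancedI[where t = "norm x"] norm_dominant_sum_bounds[THEN conjunct1]
          norm_dominant_sum_bounds[THEN conjunct2]) auto
  qed
qed

lemma balanced_if_rot_in_cone: "rot \<theta> z \<in> vcone \<union> hcone \<Longrightarrow> z \<in> balanced"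
  using rot_cone_balanced[of "rot \<theta> z" "-\<theta>"] by (simp add: rot_uminus_rot)

lemma vcone_sets: "vcone \<in> sets borel"
proof -
  have "closed {z. escape_radius \<le> norm (fst z) \<and> norm (snd z - poly P (fst z)) \<le> slope * norm \<delta> * norm (fst z)}"
    by (intro closed_Collect_conj closed_Collect_le continuous_intros)
  then show ?thesis
    by (simp add: vcone_def case_prod_unfold)
qed

lemma hcone_sets: "hcone \<in> sets borel"
proof -
  have "closed {z. escape_radius \<le> norm (snd z) \<and> norm (\<delta> * fst z - poly P (snd z)) \<le> slope * norm (snd z)}"
    by (intro closed_Collect_conj closed_Collect_le continuous_intros)
  then show ?thesis
    by (simp add: hcone_def case_prod_unfold)
qed

primrec letter_map :: "letter \<Rightarrow> complex \<times> complex \<Rightarrow> complex \<times> complex" where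
  "letter_map H1 = henon P \<delta>"
| "letter_map H2 = rot (-\<theta>) \<circ> henon P \<delta> \<circ> rot \<theta>"
| "letter_map H1_inv = henon_inv P \<delta>"
| "letter_map H2_inv = rot (-\<theta>) \<circ> henon_inv P \<delta> \<circ> rot \<theta>"

primrec letter_cone :: "letter \<Rightarrow> (complex \<times> complex) set" where
  "letter_cone H1 = vcone"
| "letter_cone H2 = rot \<theta> -` vcone"
| "letter_cone H1_inv = hcone"
| "letter_cone H2_inv = rot \<theta> -` hcone"

lemma inv_letter_map: "inv (letter_map k) = letter_map (letter_flip k)"
  using \<delta>_nonzero
  by (intro inv_unique_comp; cases k)
     (auto simp: fun_eq_iff rot_uminus_rot rot_rot_uminus henon_inv_henon henon_henon_inv)

lemma letter_map_measurable: "letter_map k \<in> borel_measurable borel"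
  using henon_measurable henon_inv_measurable rot_measurable by (cases k) auto

lemma pingpong_letters:
  assumes "\<And>j. 0 < \<rho> j \<and> \<rho> j < 1"
  shows "pingpong UNIV letter_flip letter_map letter_cone norm \<rho>"
proof
  show "finite (UNIV :: letter set)"
    by simp
  show "letter_map j \<in> borel_measurable borel" for j
    by (rule letter_map_measurable)
  show "letter_cone j \<in> sets borel" for j
    using vcone_sets hcone_sets by (cases j) (simp_all add: measurable_sets_borel[OF rot_measurable])
  show "letter_map (letter_flip j) (letter_map j z) = z" for j z
    using \<delta>_nonzero
    by (cases j) (simp_all add: rot_uminus_rot rot_rot_uminus henon_inv_henon henon_henon_inv)
  show "letter_cone j \<inter> letter_cone k = {}" if "j \<noteq> k" for j k
    using that vcone_hcone_disjoint vcone_balanced_disjoint hcone_balanced_disjoint balanced_if_rot_in_cone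
    by (cases j; cases k) auto
  show "letter_map k z \<in> letter_cone k" if "k \<noteq> letter_flip j" "z \<in> letter_cone j" for j k z
    using that rot_cone_balanced[of z \<theta>] balanced_if_rot_in_cone[of z]
      henon_vcone henon_inv_hcone henon_balanced henon_inv_balanced
    by (cases j; cases k) (auto simp: rot_rot_uminus)
  show "norm (letter_map (letter_flip j) z) \<le> norm z - 1" if "z \<in> letter_cone j" for j z
    using that norm_henon_inv_vcone[of z] norm_henon_hcone[of z]
      norm_henon_inv_vcone[of "rot \<theta> z"] norm_henon_hcone[of "rot \<theta> z"]
    by (cases j) (simp_all add: norm_rot)
qed (use assms in auto)

theorem superharmonic_weight_exists:
  fixes a :: "letter \<Rightarrow> real"
  assumes a_pos: "\<And>k. 0 < a k" and a_sum: "(\<Sum>k\<in>UNIV. a k) = 1"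
  shows "\<exists>w. w \<in> borel_measurable borel \<and> (\<forall>z. 0 \<le> w z \<and> w z \<le> 1)
    \<and> (\<forall>z. (\<Sum>k\<in>UNIV. a k * w (letter_map k z)) \<le> w z)
    \<and> (\<forall>z. 2 * escape_radius < norm z \<longrightarrow> (\<Sum>k\<in>UNIV. a k * w (letter_map k z)) < w z)"
proof -
  obtain r s where rs: "0 < r" "r < 1" "0 < s" "s < 1"
    "a H1 * r + a H2 * s + a H2_inv * s + a H1_inv / r < 1"
    "a H1_inv * r + a H2 * s + a H2_inv * s + a H1 / r < 1"
    "a H1 * r + a H1_inv * r + a H2 * s + a H2_inv / s < 1"
    "a H1 * r + a H1_inv * r + a H2_inv * s + a H2 / s < 1"
    using contraction_rates_exist[of "a H1" "a H2" "a H1_inv" "a H2_inv"] a_pos a_sum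
    by (auto simp: sum_letters)
  define \<rho> where "\<rho> = (\<lambda>k. case k of H1 \<Rightarrow> r | H2 \<Rightarrow> s | H1_inv \<Rightarrow> r | H2_inv \<Rightarrow> s)"
  interpret pingpong UNIV letter_flip letter_map letter_cone norm \<rho>
    using rs by (intro pingpong_letters) (simp add: \<rho>_def split: letter.split)
  have contracting: "(\<Sum>k\<in>UNIV - {letter_flip j}. a k * \<rho> k) + a (letter_flip j) / \<rho> j < 1" for j
    using rs by (cases j) (simp_all add: sum_diff1 sum_letters \<rho>_def algebra_simps)
  have entering: "\<exists>k\<in>UNIV. letter_map k z \<in> letter_cone k" if "2 * escape_radius < norm z" for z
    using outside_ball_enters_cone[OF that] by (metis UNIV_I letter_map.simps(1,3) letter_cone.simps(1,3))
  show ?thesis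
    using weight_measurable weight_bounds a_sum contracting entering
      weight_superharmonic[of a] weight_strictly_superharmonic[of a] a_pos
    by (intro exI[of _ weight]) (auto intro: less_imp_le)
qed

lemma stationary_measure_letters:
  assumes "stationary a1 a2 a3 a4 (letter_map H1) (letter_map H2) \<mu>"
    and "0 < a1" "0 < a2" "0 < a3" "0 < a4"
  shows "stationary_measure borel \<mu> UNIV (case_letter a1 a2 a3 a4) letter_map"
proof
  show "sets \<mu> = sets borel"
    using assms(1) by (simp add: stationary_def)
  show "0 < case_letter a1 a2 a3 a4 k" for k
    using assms(2-5) by (cases k) simp_all
  show "emeasure \<mu> A = (\<Sum>k\<in>UNIV. ennreal (case_letter a1 a2 a3 a4 k) * emeasure (distr \<mu> borel (letter_map k)) A)"
    if "A \<in> sets borel" for A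
    using assms(1) that unfolding stationary_def inv_letter_map by (simp add: sum_letters)
qed (simp_all add: letter_map_measurable)

lemma orbit_leaves_bounded:
  assumes "filled_julia (letter_map H1) \<inter> filled_julia (letter_map H2) = {}" and "bounded D"
  shows "\<exists>k. \<exists>n. (letter_map k ^^ n) z \<notin> D"
proof (rule ccontr)
  assume "\<nexists>k n. (letter_map k ^^ n) z \<notin> D"
  then have orbits: "(letter_map k ^^ n) z \<in> D" for k n
    by blast
  have "z \<in> filled_julia (letter_map k)" for k
    using assms(2) orbits by (rule filled_juliaI) (simp only: inv_letter_map orbits)
  with assms(1) show False
    by blast
qed

theorem no_stationary_measure:
  assumes "0 < a1" "0 < a2" "0 < a3" "0 < a4" "a1 + a2 + a3 + a4 = 1"
    and "filled_julia (letter_map H1) \<inter> filled_julia (letter_map H2) = {}"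
  shows "\<not> stationary a1 a2 a3 a4 (letter_map H1) (letter_map H2) \<mu>"
proof
  assume \<mu>: "stationary a1 a2 a3 a4 (letter_map H1) (letter_map H2) \<mu>"
  interpret stationary_measure borel \<mu> UNIV "case_letter a1 a2 a3 a4" letter_map
    using stationary_measure_letters[OF \<mu> assms(1-4)] .
  have "prob_space \<mu>"
    using \<mu> by (simp add: stationary_def)
  then have total: "emeasure \<mu> UNIV = 1"
    using prob_space.emeasure_space_1 space_\<mu> by fastforce
  obtain w where w: "w \<in> borel_measurable borel" "\<And>z. 0 \<le> w z \<and> w z \<le> 1"
    "\<And>z. (\<Sum>k\<in>UNIV. case_letter a1 a2 a3 a4 k * w (letter_map k z)) \<le> w z"
    "\<And>z. 2 * escape_radius < norm z \<Longrightarrow> (\<Sum>k\<in>UNIV. case_letter a1 a2 a3 a4 k * w (letter_map k z)) < w z"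
    using superharmonic_weight_exists[of "case_letter a1 a2 a3 a4"] a_pos assms(5) by (auto simp: sum_letters)
  define D where "D = cball (0 :: complex \<times> complex) (2 * escape_radius)"
  have "UNIV - D \<in> null_sets \<mu>"
    using null_sets_if_superharmonic[of w D] w total by (auto simp: D_def)
  moreover have "bounded D"
    by (simp add: D_def)
  ultimately have "UNIV \<in> null_sets \<mu>"
    using null_space_if_escaping[of D] orbit_leaves_bounded[OF assms(6)] by simp
  with total show False
    by (simp add: null_sets_def)
qed
end

theorem theoremC:
  fixes P :: "complex poly" and \<delta> :: complex and \<theta> :: real
    and a1 a2 a3 a4 :: real
    and h1 h2 :: "complex \<times> complex \<Rightarrow> complex \<times> complex"
  assumes "degree P \<ge> 2"
    and "\<delta> \<noteq> 0"
    and "h1 = henon P \<delta>"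
    and "\<theta> \<in> {0<..<2*pi} - {pi/2, pi, 3*pi/2}"
    and "h2 = inv (rot \<theta>) \<circ> h1 \<circ> rot \<theta>"
    and "a1 > 0" "a2 > 0" "a3 > 0" "a4 > 0"
    and "a1 + a2 + a3 + a4 = 1"
    and "filled_julia h1 \<inter> filled_julia h2 = {}"
  shows "\<not> (\<exists>\<mu>. stationary a1 a2 a3 a4 h1 h2 \<mu>)"
proof -
  interpret henon_pair P \<delta> \<theta>
    using assms(1,2) sin_cos_nonzero[OF assms(4)] by unfold_locales auto
  have "h1 = letter_map H1" "h2 = letter_map H2"
    using assms(3,5) by (simp_all add: inv_rot)
  then show ?thesis
    using no_stationary_measure assms(6-11) by simp
qed

end
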